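(* Let $T$ be a $C_{p^rq^s}$-transfer system with exactly two connected components. Then $T$ is lesser simply paired if and only if the connected component of $(0,0)$ is $V_0=\{(0,j):0\le j\le s\}$ or $H_0=\{(i,0):0\le i\le r\}$. In that case $\mathrm{Hull}(T)\ne T_c$, so $(T,\mathrm{Hull}(T))$ and $(T,T_c)$ are two distinct compatible pairs and are the only compatible pairs with first entry $T$.
   Context: $p,q$ are distinct primes and $r,s\ge 0$ integers. The subgroups of $C_{p^rq^s}$ are identified with grid points $(i,j)$, $0\le i\le r$, $0\le j\le s$, where $(i,j)$ stands for $C_{p^iq^j}$ (intersection is coordinatewise minimum). A $C_{p^rq^s}$-transfer system is a partial order $\to$ on these vertices such that: $(i_1,j_1)\to(i_2,j_2)$ implies $i_1\le i_2$, $j_1\le j_2$; it is reflexive and transitive; and $(i_1,j_1)\to(i_2,j_2)$ implies $(\min\{i_1,a\},\min\{j_1,b\})\to(\min\{i_2,a\},\min\{j_2,b\})$ for every vertex $(a,b)$. Connected components are those of the underlying undirected graph. A transfer system is saturated if whenever $L\le K\le H$ and $L\to H$ is in it then $K\to H$ is in it; $\mathrm{Hull}(T)$ is the smallest saturated transfer system containing $T$; $T_c$ is the complete transfer system (all $K\to H$ with $K\le H$). A pair $(T,T')$ is compatible if $T\subseteq T'$ and for all subgroups $A,B,C$ with $B,C\le A$: if $B\to A$ is in $T$ and $B\cap C\to B$ is in $T'$ then $C\to A$ is in $T'$. $T$ is lesser simply paired if for every transfer system $T'\supseteq T$, $(T,T')$ is compatible iff $T'\in\{\mathrm{Hull}(T),T_c\}$.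 *)

theory Defs
  imports Main "HOL-Computational_Algebra.Primes"
begin

text \<open>Subgroups of the cyclic group of order p^r q^s, encoded as grid points (i,j)
  with i \<le> r, j \<le> s; (i,j) stands for the subgroup of order p^i q^j.
  A transfer system is a relation T on these vertices, (K,H) \<in> T meaning K \<rightarrow> H.\<close>

type_synonym vtx = "nat \<times> nat"

definition verts :: "nat \<Rightarrow> nat \<Rightarrow> vtx set" where
  "verts r s = {(i,j). i \<le> r \<and> j \<le> s}"

definition sub :: "vtx \<Rightarrow> vtx \<Rightarrow> bool" where
  "sub x y \<longleftrightarrow> fst x \<le> fst y \<and> snd x \<le> snd y"

definition meet :: "vtx \<Rightarrow> vtx \<Rightarrow> vtx" where
  "meet x y = (min (fst x) (fst y), min (snd x) (snd y))"

definition transfer_system :: "nat \<Rightarrow> nat \<Rightarrow> vtx rel \<Rightarrow> bool" where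
  "transfer_system r s T \<longleftrightarrow>
     T \<subseteq> verts r s \<times> verts r s \<and>
     (\<forall>x y. (x, y) \<in> T \<longrightarrow> sub x y) \<and>
     (\<forall>x \<in> verts r s. (x, x) \<in> T) \<and>
     trans T \<and>
     (\<forall>x y a. (x, y) \<in> T \<longrightarrow> a \<in> verts r s \<longrightarrow> (meet x a, meet y a) \<in> T)"

definition component :: "vtx rel \<Rightarrow> vtx \<Rightarrow> vtx set" where
  "component T x = ((T \<union> converse T)\<^sup>*) `` {x}"

definition num_components :: "nat \<Rightarrow> nat \<Rightarrow> vtx rel \<Rightarrow> nat" where
  "num_components r s T = card (component T ` verts r s)"

definition saturated :: "nat \<Rightarrow> nat \<Rightarrow> vtx rel \<Rightarrow> bool" where
  "saturated r s T \<longleftrightarrow>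
     (\<forall>L \<in> verts r s. \<forall>K \<in> verts r s. \<forall>H \<in> verts r s.
        sub L K \<longrightarrow> sub K H \<longrightarrow> (L, H) \<in> T \<longrightarrow> (K, H) \<in> T)"

definition complete_ts :: "nat \<Rightarrow> nat \<Rightarrow> vtx rel" where
  "complete_ts r s = {(K, H). K \<in> verts r s \<and> H \<in> verts r s \<and> sub K H}"

definition Hull :: "nat \<Rightarrow> nat \<Rightarrow> vtx rel \<Rightarrow> vtx rel" where
  "Hull r s T = \<Inter> {T'. transfer_system r s T' \<and> saturated r s T' \<and> T \<subseteq> T'}"

definition compatible :: "nat \<Rightarrow> nat \<Rightarrow> vtx rel \<Rightarrow> vtx rel \<Rightarrow> bool" where
  "compatible r s T T' \<longleftrightarrow> T \<subseteq> T' \<and>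
     (\<forall>A \<in> verts r s. \<forall>B \<in> verts r s. \<forall>C \<in> verts r s.
        sub B A \<longrightarrow> sub C A \<longrightarrow> (B, A) \<in> T \<longrightarrow> (meet B C, B) \<in> T' \<longrightarrow> (C, A) \<in> T')"

definition lesser_simply_paired :: "nat \<Rightarrow> nat \<Rightarrow> vtx rel \<Rightarrow> bool" where
  "lesser_simply_paired r s T \<longleftrightarrow>
     (\<forall>T'. transfer_system r s T' \<and> T \<subseteq> T' \<longrightarrow>
        (compatible r s T T' \<longleftrightarrow> T' \<in> {Hull r s T, complete_ts r s}))"

definition V0 :: "nat \<Rightarrow> vtx set" where
  "V0 s = {(0, j) | j. j \<le> s}"

definition H0 :: "nat \<Rightarrow> vtx set" where
  "H0 r = {(i, 0) | i. i \<le> r}"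

end

theory Submission
  imports Defs
begin

text \<open>The component of (0,0) is closed downwards and the other component is closed under meets,
  so the two components are the up-set of a single vertex e \<noteq> (0,0) and its complement, and T
  contains the arrows from e, resp. from (0,0), to all vertices of the respective component.
  Hence every compatible T' contains the relation of all inclusions that do not cross from the
  complement into the up-set, and this relation is Hull(T). If e is an atom, a single crossing
  arrow x \<rightarrow> y in T' restricts along e to (0,0) \<rightarrow> e, and compatibility then produces every
  crossing inclusion, so T' is complete. Otherwise some u with (0,0) < u < e exists, and also
  allowing every inclusion that starts outside the up-set of u gives a third compatible
  transfer system.\<close>

lemma meet_fst [simp]: "fst (meet x y) = min (fst x) (fst y)"
  by (simp add: meet_def)

lemma meet_snd [simp]: "snd (meet x y) = min (snd x) (snd y)"
  by (simp add: meet_def)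

lemma zero_meet [simp]: "meet (0,0) x = (0,0)"
  by (simp add: meet_def)

lemma meet_idem [simp]: "meet x x = x"
  by (simp add: meet_def)

lemma mem_verts_iff: "x \<in> verts r s \<longleftrightarrow> fst x \<le> r \<and> snd x \<le> s"
  by (cases x) (simp add: verts_def)

lemma zero_in_verts [simp]: "(0,0) \<in> verts r s"
  by (simp add: verts_def)

lemma finite_verts: "finite (verts r s)"
  by (rule finite_subset[of _ "{0..r} \<times> {0..s}"]) (auto simp: verts_def)

lemma meet_in_verts: "x \<in> verts r s \<Longrightarrow> meet x a \<in> verts r s"
  by (auto simp: mem_verts_iff)

lemma sub_refl [simp]: "sub x x"
  by (simp add: sub_def)

lemma zero_sub [simp]: "sub (0,0) x"
  by (simp add: sub_def)

lemma sub_antisym: "sub x y \<Longrightarrow> sub y x \<Longrightarrow> x = y"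
  by (auto simp: sub_def prod_eq_iff)

lemma sub_trans: "sub x y \<Longrightarrow> sub y z \<Longrightarrow> sub x z"
  by (auto simp: sub_def)

lemma sub_meet_iff: "sub z (meet x y) \<longleftrightarrow> sub z x \<and> sub z y"
  by (auto simp: sub_def)

lemma meet_mono: "sub x y \<Longrightarrow> sub (meet x a) (meet y a)"
  by (auto simp: sub_def)

lemma meet_absorb1: "sub x y \<Longrightarrow> meet x y = x"
  by (simp add: sub_def meet_def prod_eq_iff)

lemma meet_absorb2: "sub y x \<Longrightarrow> meet x y = y"
  by (simp add: sub_def meet_def prod_eq_iff)

lemma meet_closed_has_least:
  assumes "finite S" "S \<noteq> {}" and closed: "\<And>x y. x \<in> S \<Longrightarrow> y \<in> S \<Longrightarrow> meet x y \<in> S"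
  shows "\<exists>m\<in>S. \<forall>x\<in>S. sub m x"
proof -
  define size :: "vtx \<Rightarrow> nat" where "size x = fst x + snd x" for x
  define m where "m = arg_min_on size S"
  have m: "m \<in> S"
    unfolding m_def using assms(1,2) by (rule arg_min_if_finite)
  have "sub m x" if "x \<in> S" for x
  proof -
    have "\<not> size (meet m x) < size m"
      using arg_min_if_finite(2)[OF assms(1,2), of size] closed[OF m that] unfolding m_def by blast
    then show ?thesis
      by (auto simp: size_def sub_def)
  qed
  with m show ?thesis by blast
qed

lemma transfer_systemI:
  assumes "\<And>x y. (x,y) \<in> T \<Longrightarrow> x \<in> verts r s \<and> y \<in> verts r s \<and> sub x y"
    and "\<And>x. x \<in> verts r s \<Longrightarrow> (x,x) \<in> T"
    and "\<And>x y z. (x,y) \<in> T \<Longrightarrow> (y,z) \<in> T \<Longrightarrow> (x,z) \<in> T"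
    and "\<And>x y a. (x,y) \<in> T \<Longrightarrow> a \<in> verts r s \<Longrightarrow> (meet x a, meet y a) \<in> T"
  shows "transfer_system r s T"
  unfolding transfer_system_def using assms by (auto intro: transI)

lemma transfer_system_verts:
  "transfer_system r s T \<Longrightarrow> (x,y) \<in> T \<Longrightarrow> x \<in> verts r s \<and> y \<in> verts r s"
  unfolding transfer_system_def by blast

lemma transfer_system_sub: "transfer_system r s T \<Longrightarrow> (x,y) \<in> T \<Longrightarrow> sub x y"
  unfolding transfer_system_def by blast

lemma transfer_system_refl: "transfer_system r s T \<Longrightarrow> x \<in> verts r s \<Longrightarrow> (x,x) \<in> T"
  unfolding transfer_system_def by blast

lemma transfer_system_trans:
  "transfer_system r s T \<Longrightarrow> (x,y) \<in> T \<Longrightarrow> (y,z) \<in> T \<Longrightarrow> (x,z) \<in> T"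
  unfolding transfer_system_def by (blast dest: transD)

lemma transfer_system_meet:
  "transfer_system r s T \<Longrightarrow> (x,y) \<in> T \<Longrightarrow> a \<in> verts r s \<Longrightarrow> (meet x a, meet y a) \<in> T"
  unfolding transfer_system_def by blast

lemma compatibleI:
  assumes "T \<subseteq> T'"
    and "\<And>A B C. A \<in> verts r s \<Longrightarrow> B \<in> verts r s \<Longrightarrow> C \<in> verts r s \<Longrightarrow> sub B A \<Longrightarrow> sub C A
      \<Longrightarrow> (B,A) \<in> T \<Longrightarrow> (meet B C, B) \<in> T' \<Longrightarrow> (C,A) \<in> T'"
  shows "compatible r s T T'"
  using assms unfolding compatible_def by blast

lemma compatibleD:
  assumes "compatible r s T T'" "A \<in> verts r s" "B \<in> verts r s" "C \<in> verts r s"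
    "sub B A" "sub C A" "(B,A) \<in> T" "(meet B C, B) \<in> T'"
  shows "(C,A) \<in> T'"
  using assms unfolding compatible_def by blast

lemma mem_complete_ts_iff:
  "(x,y) \<in> complete_ts r s \<longleftrightarrow> x \<in> verts r s \<and> y \<in> verts r s \<and> sub x y"
  by (simp add: complete_ts_def)

lemma transfer_system_subset_complete_ts:
  "transfer_system r s T \<Longrightarrow> T \<subseteq> complete_ts r s"
  by (auto simp: mem_complete_ts_iff dest: transfer_system_verts transfer_system_sub)

lemma compatible_complete_ts:
  "transfer_system r s T \<Longrightarrow> compatible r s T (complete_ts r s)"
  by (rule compatibleI) (auto simp: mem_complete_ts_iff transfer_system_subset_complete_ts)

subsection \<open>Connected components\<close>

lemma component_self: "x \<in> component T x"
  by (simp add: component_def)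

lemma component_sym:
  assumes "y \<in> component T x" shows "x \<in> component T y"
proof -
  have "(y,x) \<in> (converse (T \<union> converse T))\<^sup>*"
    using assms by (simp add: component_def rtrancl_converseI)
  then show ?thesis
    by (simp add: component_def converse_Un Un_commute)
qed

lemma component_eq_iff: "component T x = component T y \<longleftrightarrow> y \<in> component T x"
proof
  assume "y \<in> component T x"
  then have "(x,y) \<in> (T \<union> converse T)\<^sup>*" "(y,x) \<in> (T \<union> converse T)\<^sup>*"
    using component_sym by (fastforce simp: component_def)+
  then show "component T x = component T y"
    unfolding component_def by (auto intro: rtrancl_trans)
qed (simp add: component_self)

lemma arrow_in_component: "(x,y) \<in> T \<Longrightarrow> y \<in> component T x"
  by (auto simp: component_def)

lemma component_subset_verts:
  assumes ts: "transfer_system r s T" and "x \<in> verts r s"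
  shows "component T x \<subseteq> verts r s"
proof
  fix y assume "y \<in> component T x"
  then have "(x,y) \<in> (T \<union> converse T)\<^sup>*" by (simp add: component_def)
  then show "y \<in> verts r s"
    by (induction rule: rtrancl_induct) (use assms in \<open>auto dest: transfer_system_verts\<close>)
qed

lemma meet_in_component:
  assumes ts: "transfer_system r s T" and a: "a \<in> verts r s" and y: "y \<in> component T x"
  shows "meet y a \<in> component T (meet x a)"
proof -
  have "(x,y) \<in> (T \<union> converse T)\<^sup>*" using y by (simp add: component_def)
  then have "(meet x a, meet y a) \<in> (T \<union> converse T)\<^sup>*"
  proof (induction rule: rtrancl_induct)
    case (step y z)
    then have "(meet y a, meet z a) \<in> T \<union> converse T"
      using transfer_system_meet[OF ts _ a] by blast
    with step.IH show ?case by (rule rtrancl_into_rtrancl)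
  qed simp
  then show ?thesis by (simp add: component_def)
qed

lemma component_meet_closed:
  assumes ts: "transfer_system r s T" and "z \<in> verts r s"
    and x: "x \<in> component T z" and y: "y \<in> component T z"
  shows "meet x y \<in> component T z"
proof -
  have same: "component T y = component T z"
    using component_eq_iff[of T z y] y by simp
  have "y \<in> verts r s"
    using component_subset_verts[OF ts \<open>z \<in> verts r s\<close>] y by blast
  moreover have "x \<in> component T y" using x same by simp
  ultimately have "meet x y \<in> component T (meet y y)"
    by (rule meet_in_component[OF ts])
  then show ?thesis using same by simp
qed

lemma component_zero_down_closed:
  assumes ts: "transfer_system r s T" and "x \<in> component T (0,0)" "y \<in> verts r s" "sub y x"
  shows "y \<in> component T (0,0)"
  using meet_in_component[OF ts \<open>y \<in> verts r s\<close> \<open>x \<in> component T (0,0)\<close>]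
  by (simp add: meet_absorb2 \<open>sub y x\<close>)

text \<open>A backward arrow z \<rightarrow> y on a path from m is turned into m \<rightarrow> z by restricting m \<rightarrow> y
  along z.\<close>

lemma least_of_component_transfers:
  assumes ts: "transfer_system r s T" and m: "m \<in> verts r s"
    and least: "\<And>y. y \<in> component T m \<Longrightarrow> sub m y" and y: "y \<in> component T m"
  shows "(m,y) \<in> T"
proof -
  have "(m,y) \<in> (T \<union> converse T)\<^sup>*" using y by (simp add: component_def)
  then show ?thesis
  proof (induction rule: rtrancl_induct)
    case base show ?case using ts m by (rule transfer_system_refl)
  next
    case (step y z)
    have "(m,z) \<in> (T \<union> converse T)\<^sup>*" using step.hyps by (rule rtrancl_into_rtrancl)
    then have "sub m z" using least by (simp add: component_def)
    from step.hyps(2) show ?case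
    proof
      assume "(y,z) \<in> T"
      with step.IH ts show ?thesis by (blast intro: transfer_system_trans)
    next
      assume "(y,z) \<in> converse T"
      then have "(z,y) \<in> T" by simp
      then have "z \<in> verts r s" "sub z y"
        using ts by (auto dest: transfer_system_verts transfer_system_sub)
      then have "(meet m z, meet y z) \<in> T"
        using transfer_system_meet[OF ts step.IH] by blast
      then show ?thesis
        using \<open>sub m z\<close> \<open>sub z y\<close> by (simp add: meet_absorb1 meet_absorb2)
    qed
  qed
qed

subsection \<open>The transfer system split at a vertex\<close>

definition split_ts :: "nat \<Rightarrow> nat \<Rightarrow> vtx \<Rightarrow> vtx rel" where
  "split_ts r s e = {(x,y). x \<in> verts r s \<and> y \<in> verts r s \<and> sub x y \<and> (sub e x \<longleftrightarrow> sub e y)}"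

lemma mem_split_ts_iff:
  "(x,y) \<in> split_ts r s e \<longleftrightarrow> x \<in> verts r s \<and> y \<in> verts r s \<and> sub x y \<and> (sub e x \<longleftrightarrow> sub e y)"
  by (simp add: split_ts_def)

lemma transfer_system_split_ts: "transfer_system r s (split_ts r s e)"
proof (rule transfer_systemI)
  show "(meet x a, meet y a) \<in> split_ts r s e" if "(x,y) \<in> split_ts r s e" "a \<in> verts r s" for x y a
    using that meet_mono[of x y a] by (auto simp: mem_split_ts_iff sub_meet_iff meet_in_verts)
qed (auto simp: mem_split_ts_iff intro: sub_trans)

lemma saturated_split_ts: "saturated r s (split_ts r s e)"
  unfolding saturated_def by (auto simp: mem_split_ts_iff intro: sub_trans)

lemma split_ts_neq_complete_ts:
  assumes "e \<in> verts r s" "e \<noteq> (0,0)"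
  shows "split_ts r s e \<noteq> complete_ts r s"
proof -
  have "((0,0),e) \<in> complete_ts r s" using assms by (simp add: mem_complete_ts_iff)
  moreover have "((0,0),e) \<notin> split_ts r s e"
    using assms by (auto simp: mem_split_ts_iff sub_def prod_eq_iff)
  ultimately show ?thesis by blast
qed

definition widened_split_ts :: "nat \<Rightarrow> nat \<Rightarrow> vtx \<Rightarrow> vtx \<Rightarrow> vtx rel" where
  "widened_split_ts r s e u = split_ts r s e \<union> {(x,y) \<in> complete_ts r s. \<not> sub u x}"

lemma mem_widened_split_ts_iff:
  "(x,y) \<in> widened_split_ts r s e u \<longleftrightarrow>
     x \<in> verts r s \<and> y \<in> verts r s \<and> sub x y \<and> ((sub e x \<longleftrightarrow> sub e y) \<or> \<not> sub u x)"
  by (auto simp: widened_split_ts_def mem_split_ts_iff mem_complete_ts_iff)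

lemma transfer_system_widened_split_ts: "transfer_system r s (widened_split_ts r s e u)"
proof (rule transfer_systemI)
  show "(x,z) \<in> widened_split_ts r s e u"
    if "(x,y) \<in> widened_split_ts r s e u" "(y,z) \<in> widened_split_ts r s e u" for x y z
    using that sub_trans[of u x y] by (auto simp: mem_widened_split_ts_iff intro: sub_trans)
  show "(meet x a, meet y a) \<in> widened_split_ts r s e u"
    if "(x,y) \<in> widened_split_ts r s e u" "a \<in> verts r s" for x y a
    using that meet_mono[of x y a] by (auto simp: mem_widened_split_ts_iff sub_meet_iff meet_in_verts)
qed (auto simp: mem_widened_split_ts_iff)

subsection \<open>Transfer systems with two components\<close>

lemma two_components_partition:
  assumes "num_components r s T = 2"
  obtains z where "z \<in> verts r s"
    "\<And>x. x \<in> verts r s \<Longrightarrow> x \<in> component T z \<longleftrightarrow> x \<notin> component T (0,0)"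
proof -
  obtain X Y where XY: "component T ` verts r s = {X,Y}" "X \<noteq> Y"
    using assms by (auto simp: num_components_def card_2_iff)
  have zero: "component T (0,0) \<in> {X,Y}"
    unfolding XY(1)[symmetric] by simp
  obtain C where C: "{X,Y} = {component T (0,0), C}" "C \<noteq> component T (0,0)"
  proof (cases "component T (0,0) = X")
    case True
    then show thesis using XY(2) by (intro that[of Y]) auto
  next
    case False
    then show thesis using zero XY(2) by (intro that[of X]) (auto simp: insert_commute)
  qed
  have "C \<in> component T ` verts r s"
    unfolding XY(1) C(1) by simp
  then obtain z where z: "z \<in> verts r s" "component T z = C" by blast
  show ?thesis
  proof (rule that)
    show "z \<in> verts r s" by (fact z(1))
    show "x \<in> component T z \<longleftrightarrow> x \<notin> component T (0,0)" if "x \<in> verts r s" for x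
    proof -
      have "component T x \<in> {component T (0,0), C}"
        unfolding C(1)[symmetric] XY(1)[symmetric] using that by simp
      then show ?thesis
        unfolding component_eq_iff[symmetric] using z(2) C(2) by auto
    qed
  qed
qed

lemma component_has_least:
  assumes ts: "transfer_system r s T" and "z \<in> verts r s"
  shows "\<exists>e\<in>component T z. \<forall>x\<in>component T z. sub e x"
proof (rule meet_closed_has_least)
  show "finite (component T z)"
    using finite_verts component_subset_verts[OF assms] by (rule finite_subset[rotated])
  show "component T z \<noteq> {}" using component_self by blast
qed (rule component_meet_closed[OF assms])

lemma two_components_upset:
  assumes ts: "transfer_system r s T" and "num_components r s T = 2"
  obtains e where "e \<in> verts r s"
    "component T e = {x \<in> verts r s. sub e x}"
    "component T (0,0) = {x \<in> verts r s. \<not> sub e x}"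
proof -
  obtain z where z: "z \<in> verts r s"
    and partition: "\<And>x. x \<in> verts r s \<Longrightarrow> x \<in> component T z \<longleftrightarrow> x \<notin> component T (0,0)"
    using two_components_partition[OF \<open>num_components r s T = 2\<close>] by blast
  obtain e where e: "e \<in> component T z" and least: "\<And>x. x \<in> component T z \<Longrightarrow> sub e x"
    using component_has_least[OF ts z] by blast
  have e_verts: "e \<in> verts r s" using e component_subset_verts[OF ts z] by blast
  have comp_e: "component T e = component T z"
    using e by (metis component_eq_iff component_sym)
  have upset: "component T e = {x \<in> verts r s. sub e x}"
  proof
    show "component T e \<subseteq> {x \<in> verts r s. sub e x}"
      using component_subset_verts[OF ts e_verts] least comp_e by auto
    show "{x \<in> verts r s. sub e x} \<subseteq> component T e"
    proof clarify
      fix x assume x: "x \<in> verts r s" "sub e x"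
      show "x \<in> component T e"
      proof (rule ccontr)
        assume "x \<notin> component T e"
        then have "e \<in> component T (0,0)"
          using partition[OF x(1)] comp_e component_zero_down_closed[OF ts _ e_verts x(2)] by blast
        then show False using partition[OF e_verts] e by blast
      qed
    qed
  qed
  have "x \<in> component T (0,0) \<longleftrightarrow> x \<in> verts r s \<and> \<not> sub e x" for x
  proof (cases "x \<in> verts r s")
    case True
    then show ?thesis using partition[OF True] upset comp_e by blast
  qed (use component_subset_verts[OF ts zero_in_verts] in blast)
  then have "component T (0,0) = {x \<in> verts r s. \<not> sub e x}" by blast
  with e_verts upset show thesis by (rule that)
qed

lemma two_component_structure:
  assumes ts: "transfer_system r s T" and "num_components r s T = 2"
  obtains e where "e \<in> verts r s" "e \<noteq> (0,0)"
    "component T (0,0) = {x \<in> verts r s. \<not> sub e x}"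
    "T \<subseteq> split_ts r s e"
    "\<And>y. y \<in> verts r s \<Longrightarrow> sub e y \<Longrightarrow> (e,y) \<in> T"
    "\<And>y. y \<in> verts r s \<Longrightarrow> \<not> sub e y \<Longrightarrow> ((0,0),y) \<in> T"
proof -
  obtain e where e_verts: "e \<in> verts r s"
    and E: "component T e = {x \<in> verts r s. sub e x}"
    and D: "component T (0,0) = {x \<in> verts r s. \<not> sub e x}"
    using two_components_upset[OF assms] by blast
  show thesis
  proof (rule that)
    show "e \<in> verts r s" by fact
    show "e \<noteq> (0,0)" using D component_self[of "(0,0)" T] by auto
    show "component T (0,0) = {x \<in> verts r s. \<not> sub e x}" by fact
    show "T \<subseteq> split_ts r s e"
    proof clarify
      fix x y assume xy: "(x,y) \<in> T"
      have "component T x = component T y"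
        unfolding component_eq_iff by (rule arrow_in_component[OF xy])
      then have "x \<in> component T (0,0) \<longleftrightarrow> y \<in> component T (0,0)"
        by (metis component_eq_iff component_sym)
      moreover have "x \<in> verts r s" "y \<in> verts r s" "sub x y"
        using transfer_system_verts[OF ts xy] transfer_system_sub[OF ts xy] by auto
      ultimately show "(x,y) \<in> split_ts r s e" using D by (auto simp: mem_split_ts_iff)
    qed
    show "(e,y) \<in> T" if "y \<in> verts r s" "sub e y" for y
      using least_of_component_transfers[OF ts e_verts, of y] that E by simp
    show "((0,0),y) \<in> T" if "y \<in> verts r s" "\<not> sub e y" for y
      using least_of_component_transfers[OF ts zero_in_verts, of y] that D by simp
  qed
qed

subsection \<open>Compatible pairs\<close>

lemma lesser_simply_paired_only_pairs:
  "lesser_simply_paired r s T \<Longrightarrow> \<forall>T'. transfer_system r s T' \<and> compatible r s T T' \<longrightarrow>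
     T' = Hull r s T \<or> T' = complete_ts r s"
  unfolding lesser_simply_paired_def compatible_def by blast

locale two_component_ts =
  fixes r s :: nat and T :: "vtx rel" and e :: vtx
  assumes transfer_system: "transfer_system r s T"
    and e_in_verts: "e \<in> verts r s" and e_nonzero: "e \<noteq> (0,0)"
    and subset_split_ts: "T \<subseteq> split_ts r s e"
    and transfer_from_e: "\<And>y. y \<in> verts r s \<Longrightarrow> sub e y \<Longrightarrow> (e,y) \<in> T"
    and transfer_from_zero: "\<And>y. y \<in> verts r s \<Longrightarrow> \<not> sub e y \<Longrightarrow> ((0,0),y) \<in> T"
begin

lemma Hull_eq_split_ts: "Hull r s T = split_ts r s e"
proof
  show "Hull r s T \<subseteq> split_ts r s e"
    unfolding Hull_def
    by (rule Inter_lower) (use transfer_system_split_ts saturated_split_ts subset_split_ts in blast)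
  show "split_ts r s e \<subseteq> Hull r s T"
    unfolding Hull_def
  proof (rule Inter_greatest, clarify)
    fix S x y assume "transfer_system r s S" "saturated r s S" "T \<subseteq> S"
      and "(x,y) \<in> split_ts r s e"
    then have sat: "saturated r s S" and "T \<subseteq> S" and v: "x \<in> verts r s" "y \<in> verts r s" "sub x y"
      and iff: "sub e x \<longleftrightarrow> sub e y"
      by (simp_all add: mem_split_ts_iff)
    show "(x,y) \<in> S"
    proof (cases "sub e y")
      case True
      then have "(e,y) \<in> S" using transfer_from_e v \<open>T \<subseteq> S\<close> by blast
      with sat show ?thesis using True iff v e_in_verts unfolding saturated_def by blast
    next
      case False
      then have "((0,0),y) \<in> S" using transfer_from_zero v \<open>T \<subseteq> S\<close> by blast
      with sat show ?thesis using v zero_in_verts zero_sub unfolding saturated_def by blast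
    qed
  qed
qed

lemma compatible_split_ts: "compatible r s T (split_ts r s e)"
proof (rule compatibleI[OF subset_split_ts])
  fix A B C assume "A \<in> verts r s" "B \<in> verts r s" "C \<in> verts r s" "sub B A" "sub C A"
    and "(B,A) \<in> T" "(meet B C, B) \<in> split_ts r s e"
  moreover from this have "sub e B \<longleftrightarrow> sub e A" "sub e (meet B C) \<longleftrightarrow> sub e B"
    using subset_split_ts by (auto simp: mem_split_ts_iff)
  ultimately show "(C,A) \<in> split_ts r s e"
    by (auto simp: mem_split_ts_iff sub_meet_iff intro: sub_trans)
qed

text \<open>Each non-crossing inclusion x \<subseteq> y is obtained from the arrow in T from e, resp. (0,0),
  to y, because the corresponding meet with x is reflexive.\<close>

lemma split_ts_subset_compatible:
  assumes compat: "compatible r s T T'" and ts': "transfer_system r s T'"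
  shows "split_ts r s e \<subseteq> T'"
proof clarify
  fix x y assume "(x,y) \<in> split_ts r s e"
  then have x: "x \<in> verts r s" and y: "y \<in> verts r s" and "sub x y"
    and iff: "sub e x \<longleftrightarrow> sub e y" by (simp_all add: mem_split_ts_iff)
  show "(x,y) \<in> T'"
  proof (cases "sub e y")
    case True
    then have "meet e x = e" using iff by (simp add: meet_absorb1)
    then show ?thesis
      using compatibleD[OF compat y e_in_verts x True \<open>sub x y\<close> transfer_from_e[OF y True]]
        transfer_system_refl[OF ts' e_in_verts] by simp
  next
    case False
    then show ?thesis
      using compatibleD[OF compat y zero_in_verts x zero_sub \<open>sub x y\<close> transfer_from_zero[OF y False]]
        transfer_system_refl[OF ts' zero_in_verts] by simp
  qed
qed

lemma compatible_atom_cases: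
  assumes atom: "e = (1,0) \<or> e = (0,1)"
    and ts': "transfer_system r s T'" and compat: "compatible r s T T'"
  shows "T' = split_ts r s e \<or> T' = complete_ts r s"
proof (cases "T' \<subseteq> split_ts r s e")
  case True
  then show ?thesis using split_ts_subset_compatible[OF compat ts'] by blast
next
  case False
  have meet_outside: "meet x e = (0,0)" "meet e x = (0,0)" if "\<not> sub e x" for x
    using atom that by (auto simp: sub_def meet_def)
  obtain x y where xy: "(x,y) \<in> T'" and "(x,y) \<notin> split_ts r s e" using False by auto
  moreover have "x \<in> verts r s" "y \<in> verts r s" "sub x y"
    using transfer_system_verts[OF ts' xy] transfer_system_sub[OF ts' xy] by auto
  ultimately have "\<not> sub e x" "sub e y"
    using sub_trans[of e x y] by (auto simp: mem_split_ts_iff)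
  then have zero_e: "((0,0), e) \<in> T'"
    using transfer_system_meet[OF ts' xy e_in_verts] meet_outside by (simp add: meet_absorb2)
  have "complete_ts r s \<subseteq> T'"
  proof clarify
    fix C A assume "(C,A) \<in> complete_ts r s"
    then have C: "C \<in> verts r s" and A: "A \<in> verts r s" and "sub C A"
      by (simp_all add: mem_complete_ts_iff)
    show "(C,A) \<in> T'"
    proof (cases "(C,A) \<in> split_ts r s e")
      case True
      then show ?thesis using split_ts_subset_compatible[OF compat ts'] by blast
    next
      case False
      then have "\<not> sub e C" "sub e A"
        using C A \<open>sub C A\<close> sub_trans[of e C A] by (auto simp: mem_split_ts_iff)
      then show ?thesis
        using compatibleD[OF compat A e_in_verts C \<open>sub e A\<close> \<open>sub C A\<close> transfer_from_e[OF A]]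
          zero_e meet_outside by simp
    qed
  qed
  then show ?thesis using transfer_system_subset_complete_ts[OF ts'] by blast
qed

lemma compatible_widened_split_ts:
  assumes "sub u e"
  shows "compatible r s T (widened_split_ts r s e u)"
proof (rule compatibleI)
  show "T \<subseteq> widened_split_ts r s e u"
    using subset_split_ts by (auto simp: widened_split_ts_def)
  fix A B C assume v: "A \<in> verts r s" "B \<in> verts r s" "C \<in> verts r s" "sub B A" "sub C A"
    and BA: "(B,A) \<in> T" and BC: "(meet B C, B) \<in> widened_split_ts r s e u"
  have B_iff_A: "sub e B \<longleftrightarrow> sub e A" using BA subset_split_ts by (auto simp: mem_split_ts_iff)
  have "sub e C \<longleftrightarrow> sub e A" if "sub u C"
  proof (cases "sub u B")
    case True
    then have "sub e (meet B C) \<longleftrightarrow> sub e B"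
      using BC \<open>sub u C\<close> by (simp add: mem_widened_split_ts_iff sub_meet_iff)
    then show ?thesis using B_iff_A v by (auto simp: sub_meet_iff intro: sub_trans)
  next
    case False
    then have "\<not> sub e A" using B_iff_A assms sub_trans by blast
    then show ?thesis using v sub_trans by blast
  qed
  then show "(C,A) \<in> widened_split_ts r s e u"
    using v by (auto simp: mem_widened_split_ts_iff)
qed

lemma not_lesser_simply_paired_if_between:
  assumes u: "u \<in> verts r s" "u \<noteq> (0,0)" "sub u e" "u \<noteq> e"
  shows "\<not> lesser_simply_paired r s T"
proof
  assume "lesser_simply_paired r s T"
  moreover have "T \<subseteq> widened_split_ts r s e u"
    using subset_split_ts by (auto simp: widened_split_ts_def)
  ultimately have "widened_split_ts r s e u \<in> {split_ts r s e, complete_ts r s}"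
    using transfer_system_widened_split_ts compatible_widened_split_ts[OF \<open>sub u e\<close>]
    unfolding lesser_simply_paired_def Hull_eq_split_ts by blast
  moreover have "((0,0),e) \<in> widened_split_ts r s e u - split_ts r s e"
    using u e_in_verts e_nonzero
    by (auto simp: mem_widened_split_ts_iff mem_split_ts_iff sub_def prod_eq_iff)
  moreover have "\<not> sub e u" using u sub_antisym by blast
  then have "(u,e) \<in> complete_ts r s - widened_split_ts r s e u"
    using u e_in_verts by (auto simp: mem_widened_split_ts_iff mem_complete_ts_iff)
  ultimately show False by blast
qed

lemma lesser_simply_paired_iff_atom:
  "lesser_simply_paired r s T \<longleftrightarrow> e = (1,0) \<or> e = (0,1)"
proof
  assume lsp: "lesser_simply_paired r s T"
  show "e = (1,0) \<or> e = (0,1)"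
  proof (rule ccontr)
    assume not_atom: "\<not> (e = (1,0) \<or> e = (0,1))"
    define u :: vtx where "u = (if fst e = 0 then (0,1) else (1,0))"
    have "u \<in> verts r s" "u \<noteq> (0,0)" "sub u e" "u \<noteq> e"
      using e_in_verts e_nonzero not_atom
      by (cases e; auto simp: u_def mem_verts_iff sub_def)+
    with lsp show False using not_lesser_simply_paired_if_between by blast
  qed
next
  assume "e = (1,0) \<or> e = (0,1)"
  then show "lesser_simply_paired r s T"
    unfolding lesser_simply_paired_def Hull_eq_split_ts
    using compatible_atom_cases compatible_split_ts compatible_complete_ts[OF transfer_system]
    by blast
qed

end

lemma compl_upset_eq_V0_or_H0_iff:
  assumes e: "e \<in> verts r s" "e \<noteq> (0,0)"
  shows "({x \<in> verts r s. \<not> sub e x} = V0 s \<or> {x \<in> verts r s. \<not> sub e x} = H0 r)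
     \<longleftrightarrow> e = (1,0) \<or> e = (0,1)"
proof
  assume "{x \<in> verts r s. \<not> sub e x} = V0 s \<or> {x \<in> verts r s. \<not> sub e x} = H0 r"
  then show "e = (1,0) \<or> e = (0,1)"
  proof
    assume D: "{x \<in> verts r s. \<not> sub e x} = V0 s"
    then have "e \<notin> V0 s" using sub_refl by blast
    then have "fst e \<noteq> 0" using e by (cases e) (auto simp: V0_def mem_verts_iff)
    then have "(1,0) \<in> verts r s" "(1,0) \<notin> V0 s"
      using e by (auto simp: mem_verts_iff V0_def)
    then have "sub e (1,0)" unfolding D[symmetric] by simp
    with \<open>fst e \<noteq> 0\<close> show ?thesis by (cases e) (simp add: sub_def)
  next
    assume D: "{x \<in> verts r s. \<not> sub e x} = H0 r"
    then have "e \<notin> H0 r" using sub_refl by blast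
    then have "snd e \<noteq> 0" using e by (cases e) (auto simp: H0_def mem_verts_iff)
    then have "(0,1) \<in> verts r s" "(0,1) \<notin> H0 r"
      using e by (auto simp: mem_verts_iff H0_def)
    then have "sub e (0,1)" unfolding D[symmetric] by simp
    with \<open>snd e \<noteq> 0\<close> show ?thesis by (cases e) (simp add: sub_def)
  qed
next
  assume "e = (1,0) \<or> e = (0,1)"
  then show "{x \<in> verts r s. \<not> sub e x} = V0 s \<or> {x \<in> verts r s. \<not> sub e x} = H0 r"
  proof
    assume "e = (1,0)"
    then have "{x \<in> verts r s. \<not> sub e x} = V0 s"
      using e by (auto simp: V0_def verts_def sub_def)
    then show ?thesis ..
  next
    assume "e = (0,1)"
    then have "{x \<in> verts r s. \<not> sub e x} = H0 r"
      using e by (auto simp: H0_def verts_def sub_def)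
    then show ?thesis ..
  qed
qed

theorem mainTheorem16:
  fixes p q r s :: nat and T :: "vtx rel"
  assumes "prime p" and "prime q" and "p \<noteq> q"
    and "transfer_system r s T"
    and "num_components r s T = 2"
  shows "(lesser_simply_paired r s T \<longleftrightarrow>
            (component T (0, 0) = V0 s \<or> component T (0, 0) = H0 r))
       \<and> ((component T (0, 0) = V0 s \<or> component T (0, 0) = H0 r) \<longrightarrow>
            Hull r s T \<noteq> complete_ts r s
          \<and> transfer_system r s (Hull r s T)
          \<and> compatible r s T (Hull r s T)
          \<and> compatible r s T (complete_ts r s)
          \<and> (\<forall>T'. transfer_system r s T' \<and> compatible r s T T' \<longrightarrow>
                  T' = Hull r s T \<or> T' = complete_ts r s))"
proof (rule two_component_structure[OF assms(4,5)])
  fix e assume e: "e \<in> verts r s" "e \<noteq> (0,0)"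
    and D: "component T (0,0) = {x \<in> verts r s. \<not> sub e x}"
    and "T \<subseteq> split_ts r s e"
    and "\<And>y. y \<in> verts r s \<Longrightarrow> sub e y \<Longrightarrow> (e,y) \<in> T"
    and "\<And>y. y \<in> verts r s \<Longrightarrow> \<not> sub e y \<Longrightarrow> ((0,0),y) \<in> T"
  then interpret two_component_ts r s T e
    using assms(4) by unfold_locales
  have cond: "(component T (0,0) = V0 s \<or> component T (0,0) = H0 r) \<longleftrightarrow>
      lesser_simply_paired r s T"
    unfolding D lesser_simply_paired_iff_atom by (rule compl_upset_eq_V0_or_H0_iff[OF e])
  have "Hull r s T \<noteq> complete_ts r s"
    unfolding Hull_eq_split_ts by (rule split_ts_neq_complete_ts[OF e])
  moreover have "transfer_system r s (Hull r s T)"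
    unfolding Hull_eq_split_ts by (rule transfer_system_split_ts)
  moreover have "compatible r s T (Hull r s T)"
    unfolding Hull_eq_split_ts by (rule compatible_split_ts)
  moreover have "compatible r s T (complete_ts r s)"
    by (rule compatible_complete_ts[OF assms(4)])
  ultimately show ?thesis
    using cond lesser_simply_paired_only_pairs[of r s T] by blast
qed

end
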